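(* Let $\Lambda$ be a row-finite $k$-graph with no sources and let $\{t_\lambda\}_{\lambda\in\Lambda}$ be a permutative representation of $C^*(\Lambda)$ on $\mathcal H$, with orthonormal basis $\{e_i\}_{i\in I}$, sets $J_\lambda,K_\lambda\subseteq I$ and bijections $\tilde\sigma_\lambda:J_\lambda\to K_\lambda$ as in the definition of permutative representation. Then for every $n\in\mathbb N^k$ and all $\lambda,\lambda'\in\Lambda^n$ with $\lambda\neq\lambda'$, we have $K_\lambda\cap K_{\lambda'}=\emptyset$.
   Context: A $k$-graph ($k\ge1$) is a countable small category $\Lambda$ with a functor $d:\Lambda\to\mathbb N^k$ satisfying unique factorization: if $d(\lambda)=m+n$ there are unique $\mu,\nu$ with $\lambda=\mu\nu$, $d(\mu)=m$, $d(\nu)=n$. $\Lambda^0$ = vertices, $r,s$ = range, source, $\Lambda^n=d^{-1}(n)$, $v\Lambda^n=\{\lambda\in\Lambda^n:r(\lambda)=v\}$, $s(\lambda)\Lambda=\{\nu:r(\nu)=s(\lambda)\}$; row-finite: each $v\Lambda^n$ finite; no sources: each $v\Lambda^n$ nonempty. A representation of $C^*(\Lambda)$ is a family of partial isometries $\{t_\lambda\}$ on a Hilbert space satisfying (CK1) $\{t_v\}$ mutually orthogonal projections, (CK2) $t_\lambda t_\eta=t_{\lambda\eta}$ when $s(\lambda)=r(\eta)$, (CK3) $t_\lambda^*t_\lambda=t_{s(\lambda)}$, (CK4) $t_v=\sum_{\lambda\in v\Lambda^n}t_\lambda t_\lambda^*$. It is permutative if $\mathcal H$ has an orthonormal basis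 $\{e_i\}_{i\in I}$ such that for each $\lambda$ there are $J_\lambda,K_\lambda\subseteq I$ and a bijection $\tilde\sigma_\lambda:J_\lambda\to K_\lambda$ with: (a) for each $n$, $\bigcup_{\lambda\in\Lambda^n}J_\lambda=\bigcup_{\lambda\in\Lambda^n}K_\lambda=I$; (b) for $\lambda\in\Lambda$, $\nu\in s(\lambda)\Lambda$: $K_\nu\subseteq J_\lambda$ and $\tilde\sigma_\lambda\circ\tilde\sigma_\nu=\tilde\sigma_{\lambda\nu}$; (c) $t_\lambda e_i=e_{\tilde\sigma_\lambda(i)}$ for $i\in J_\lambda$ and $t_\lambda e_i=0$ for $i\notin J_\lambda$; (d) $t_\lambda^*e_{\tilde\sigma_\lambda(i)}=e_i$ for $i\in J_\lambda$, and $t_\lambda^*e_j=0$ for $j\in K_{\lambda'}$ whenever $\lambda'\neq\lambda$, $d(\lambda')=d(\lambda)$. *)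

theory Defs
  imports "HOL-Analysis.Analysis"
begin

class complex_hilbert = ab_group_add +
  fixes scaleC :: "complex \<Rightarrow> 'a \<Rightarrow> 'a"
    and cinner :: "'a \<Rightarrow> 'a \<Rightarrow> complex"
  assumes scaleC_add_right: "scaleC a (x + y) = scaleC a x + scaleC a y"
    and scaleC_add_left: "scaleC (a + b) x = scaleC a x + scaleC b x"
    and scaleC_scaleC: "scaleC a (scaleC b x) = scaleC (a * b) x"
    and scaleC_one: "scaleC 1 x = x"
    and cinner_commute: "cinner x y = cnj (cinner y x)"
    and cinner_add_right: "cinner x (y + z) = cinner x y + cinner x z"
    and cinner_scaleC_right: "cinner x (scaleC a y) = a * cinner x y"
    and cinner_ge_zero: "0 \<le> Re (cinner x x)"
    and cinner_eq_zero_iff: "cinner x x = 0 \<longleftrightarrow> x = 0"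
    and cinner_complete:
      "(\<forall>\<epsilon>>0. \<exists>N. \<forall>m\<ge>N. \<forall>n\<ge>N. Re (cinner (X m - X n) (X m - X n)) < \<epsilon>)
       \<Longrightarrow> (\<exists>L. (\<lambda>n. Re (cinner (X n - L) (X n - L))) \<longlonglongrightarrow> 0)"

definition cnorm :: "'h::complex_hilbert \<Rightarrow> real" where
  "cnorm x = sqrt (Re (cinner x x))"

definition bounded_clinear :: "('h::complex_hilbert \<Rightarrow> 'h) \<Rightarrow> bool" where
  "bounded_clinear T \<longleftrightarrow>
     (\<forall>x y. T (x + y) = T x + T y) \<and> (\<forall>a x. T (scaleC a x) = scaleC a (T x)) \<and>
     (\<exists>B. \<forall>x. cnorm (T x) \<le> B * cnorm x)"

definition is_adjoint :: "('h::complex_hilbert \<Rightarrow> 'h) \<Rightarrow> ('h \<Rightarrow> 'h) \<Rightarrow> bool" where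
  "is_adjoint T S \<longleftrightarrow> (\<forall>x y. cinner (T x) y = cinner x (S y))"

text \<open>The adjoint of a (bounded) operator; unique when it exists.\<close>
definition adj :: "('h::complex_hilbert \<Rightarrow> 'h) \<Rightarrow> ('h \<Rightarrow> 'h)" where
  "adj T = (THE S. is_adjoint T S)"

definition is_projection :: "('h::complex_hilbert \<Rightarrow> 'h) \<Rightarrow> bool" where
  "is_projection P \<longleftrightarrow> bounded_clinear P \<and> P \<circ> P = P \<and> adj P = P"

definition partial_isometry :: "('h::complex_hilbert \<Rightarrow> 'h) \<Rightarrow> bool" where
  "partial_isometry T \<longleftrightarrow> bounded_clinear T \<and> is_projection (adj T \<circ> T)"

definition orthonormal_basis :: "'i set \<Rightarrow> ('i \<Rightarrow> 'h::complex_hilbert) \<Rightarrow> bool" where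
  "orthonormal_basis I e \<longleftrightarrow>
     (\<forall>i\<in>I. \<forall>j\<in>I. cinner (e i) (e j) = (if i = j then 1 else 0)) \<and>
     (\<forall>x. (\<forall>i\<in>I. cinner (e i) x = 0) \<longrightarrow> x = 0)"

text \<open>\<open>\<nat>^k\<close> is modelled as \<open>'k \<Rightarrow> nat\<close> for a finite (nonempty) type \<open>'k\<close> with
  \<open>k = CARD('k) \<ge> 1\<close>. A k-graph is a small category: morphism set \<open>L\<close>,
  vertices (identity morphisms) \<open>V \<subseteq> L\<close>, range/source \<open>r, s\<close>, composition
  \<open>cmp lam \<mu>\<close> (meaningful when \<open>s lam = r \<mu>\<close>), and degree functor \<open>d\<close>.\<close>

definition kgraph ::
  "'a set \<Rightarrow> 'a set \<Rightarrow> ('a \<Rightarrow> 'a) \<Rightarrow> ('a \<Rightarrow> 'a) \<Rightarrow> ('a \<Rightarrow> 'a \<Rightarrow> 'a)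
     \<Rightarrow> ('a \<Rightarrow> 'k::finite \<Rightarrow> nat) \<Rightarrow> bool" where
  "kgraph L V r s cmp d \<longleftrightarrow>
     countable L \<and> V \<subseteq> L \<and>
     (\<forall>lam\<in>L. r lam \<in> V \<and> s lam \<in> V) \<and>
     (\<forall>v\<in>V. r v = v \<and> s v = v) \<and>
     (\<forall>lam\<in>L. \<forall>\<mu>\<in>L. s lam = r \<mu> \<longrightarrow>
        cmp lam \<mu> \<in> L \<and> r (cmp lam \<mu>) = r lam \<and> s (cmp lam \<mu>) = s \<mu>) \<and>
     (\<forall>lam\<in>L. cmp (r lam) lam = lam \<and> cmp lam (s lam) = lam) \<and>
     (\<forall>lam\<in>L. \<forall>\<mu>\<in>L. \<forall>\<nu>\<in>L. s lam = r \<mu> \<longrightarrow> s \<mu> = r \<nu> \<longrightarrow>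
        cmp (cmp lam \<mu>) \<nu> = cmp lam (cmp \<mu> \<nu>)) \<and>
     (\<forall>lam\<in>L. \<forall>\<mu>\<in>L. s lam = r \<mu> \<longrightarrow> d (cmp lam \<mu>) = (\<lambda>j. d lam j + d \<mu> j)) \<and>
     (\<forall>lam\<in>L. \<forall>m n. d lam = (\<lambda>j. m j + n j) \<longrightarrow>
        (\<exists>!p. fst p \<in> L \<and> snd p \<in> L \<and> s (fst p) = r (snd p) \<and>
              lam = cmp (fst p) (snd p) \<and> d (fst p) = m \<and> d (snd p) = n))"

definition vLn :: "'a set \<Rightarrow> ('a \<Rightarrow> 'a) \<Rightarrow> ('a \<Rightarrow> 'k \<Rightarrow> nat) \<Rightarrow> 'a \<Rightarrow> ('k \<Rightarrow> nat) \<Rightarrow> 'a set" where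
  "vLn L r d v n = {lam\<in>L. r lam = v \<and> d lam = n}"

definition row_finite :: "'a set \<Rightarrow> 'a set \<Rightarrow> ('a \<Rightarrow> 'a) \<Rightarrow> ('a \<Rightarrow> 'k \<Rightarrow> nat) \<Rightarrow> bool" where
  "row_finite L V r d \<longleftrightarrow> (\<forall>v\<in>V. \<forall>n. finite (vLn L r d v n))"

definition no_sources :: "'a set \<Rightarrow> 'a set \<Rightarrow> ('a \<Rightarrow> 'a) \<Rightarrow> ('a \<Rightarrow> 'k \<Rightarrow> nat) \<Rightarrow> bool" where
  "no_sources L V r d \<longleftrightarrow> (\<forall>v\<in>V. \<forall>n. vLn L r d v n \<noteq> {})"

definition ck_family ::
  "'a set \<Rightarrow> 'a set \<Rightarrow> ('a \<Rightarrow> 'a) \<Rightarrow> ('a \<Rightarrow> 'a) \<Rightarrow> ('a \<Rightarrow> 'a \<Rightarrow> 'a)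
     \<Rightarrow> ('a \<Rightarrow> 'k::finite \<Rightarrow> nat) \<Rightarrow> ('a \<Rightarrow> 'h::complex_hilbert \<Rightarrow> 'h) \<Rightarrow> bool" where
  "ck_family L V r s cmp d t \<longleftrightarrow>
     (\<forall>lam\<in>L. partial_isometry (t lam)) \<and>
     \<comment> \<open>CK1\<close>
     (\<forall>v\<in>V. is_projection (t v)) \<and>
     (\<forall>v\<in>V. \<forall>w\<in>V. v \<noteq> w \<longrightarrow> t v \<circ> t w = (\<lambda>_. 0)) \<and>
     \<comment> \<open>CK2\<close>
     (\<forall>lam\<in>L. \<forall>\<eta>\<in>L. s lam = r \<eta> \<longrightarrow> t (cmp lam \<eta>) = t lam \<circ> t \<eta>) \<and>
     \<comment> \<open>CK3\<close>
     (\<forall>lam\<in>L. adj (t lam) \<circ> t lam = t (s lam)) \<and>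
     \<comment> \<open>CK4\<close>
     (\<forall>v\<in>V. \<forall>n. t v = (\<lambda>x. \<Sum>lam\<in>vLn L r d v n. t lam (adj (t lam) x)))"

definition permutative_data ::
  "'a set \<Rightarrow> 'a set \<Rightarrow> ('a \<Rightarrow> 'a) \<Rightarrow> ('a \<Rightarrow> 'a) \<Rightarrow> ('a \<Rightarrow> 'a \<Rightarrow> 'a)
     \<Rightarrow> ('a \<Rightarrow> 'k::finite \<Rightarrow> nat) \<Rightarrow> ('a \<Rightarrow> 'h::complex_hilbert \<Rightarrow> 'h)
     \<Rightarrow> 'i set \<Rightarrow> ('i \<Rightarrow> 'h) \<Rightarrow> ('a \<Rightarrow> 'i set) \<Rightarrow> ('a \<Rightarrow> 'i set) \<Rightarrow> ('a \<Rightarrow> 'i \<Rightarrow> 'i) \<Rightarrow> bool" where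
  "permutative_data L V r s cmp d t I e J K \<sigma> \<longleftrightarrow>
     orthonormal_basis I e \<and>
     (\<forall>lam\<in>L. J lam \<subseteq> I \<and> K lam \<subseteq> I \<and> bij_betw (\<sigma> lam) (J lam) (K lam)) \<and>
     \<comment> \<open>(a)\<close>
     (\<forall>n. (\<Union>lam\<in>{lam\<in>L. d lam = n}. J lam) = I \<and> (\<Union>lam\<in>{lam\<in>L. d lam = n}. K lam) = I) \<and>
     \<comment> \<open>(b): \<open>K \<nu> \<subseteq> J lam\<close> and \<open>\<sigma> lam \<circ> \<sigma> \<nu> = \<sigma> (lam\<nu>)\<close> as maps \<open>J \<nu> \<rightarrow> K (lam\<nu>)\<close>\<close>
     (\<forall>lam\<in>L. \<forall>\<nu>\<in>L. r \<nu> = s lam \<longrightarrow>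
        K \<nu> \<subseteq> J lam \<and> J (cmp lam \<nu>) = J \<nu> \<and>
        (\<forall>i\<in>J \<nu>. \<sigma> lam (\<sigma> \<nu> i) = \<sigma> (cmp lam \<nu>) i)) \<and>
     \<comment> \<open>(c)\<close>
     (\<forall>lam\<in>L. (\<forall>i\<in>J lam. t lam (e i) = e (\<sigma> lam i)) \<and> (\<forall>i\<in>I - J lam. t lam (e i) = 0)) \<and>
     \<comment> \<open>(d)\<close>
     (\<forall>lam\<in>L. (\<forall>i\<in>J lam. adj (t lam) (e (\<sigma> lam i)) = e i) \<and>
        (\<forall>lam'\<in>L. lam' \<noteq> lam \<and> d lam' = d lam \<longrightarrow> (\<forall>j\<in>K lam'. adj (t lam) (e j) = 0)))"

end

theory Submission
  imports Defs
begin

text \<open>If \<open>j \<in> K lam\<close>, then \<open>j = \<sigma> lam i\<close> with \<open>i \<in> J lam\<close>, so condition (d) gives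
  \<open>t lam\<^sup>* e j = e i \<noteq> 0\<close>; but if also \<open>j \<in> K lam'\<close> for some other \<open>lam'\<close> of the same
  degree, (d) forces \<open>t lam\<^sup>* e j = 0\<close>.\<close>

lemma orthonormal_basis_nonzero:
  assumes "orthonormal_basis I e" and "i \<in> I"
  shows "e i \<noteq> 0"
proof
  assume "e i = 0"
  then have "cinner (e i) (e i) = 0"
    using cinner_eq_zero_iff by blast
  moreover have "cinner (e i) (e i) = 1"
    using assms unfolding orthonormal_basis_def by simp
  ultimately show False
    by simp
qed

lemma permutative_data_adj_nonzero:
  assumes "permutative_data L V r s cmp d t I e J K \<sigma>" and "lam \<in> L" and "j \<in> K lam"
  shows "adj (t lam) (e j) \<noteq> 0"
proof -
  have onb: "orthonormal_basis I e" and bij: "bij_betw (\<sigma> lam) (J lam) (K lam)"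
    and "J lam \<subseteq> I"
    using assms(1,2) unfolding permutative_data_def by auto
  obtain i where i: "i \<in> J lam" "j = \<sigma> lam i"
    using bij assms(3) unfolding bij_betw_def by auto
  have "adj (t lam) (e j) = e i"
    using assms(1,2) i unfolding permutative_data_def by auto
  moreover have "e i \<noteq> 0"
    using orthonormal_basis_nonzero[OF onb] \<open>J lam \<subseteq> I\<close> i(1) by blast
  ultimately show ?thesis
    by simp
qed

lemma permutative_data_adj_vanishes:
  assumes "permutative_data L V r s cmp d t I e J K \<sigma>"
    and "lam \<in> L" and "lam' \<in> L" and "lam' \<noteq> lam" and "d lam' = d lam" and "j \<in> K lam'"
  shows "adj (t lam) (e j) = 0"
  using assms unfolding permutative_data_def by blast

lemma permutative_data_range_disjoint:
  assumes "permutative_data L V r s cmp d t I e J K \<sigma>"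
    and "lam \<in> L" and "lam' \<in> L" and "lam \<noteq> lam'" and "d lam = d lam'"
  shows "K lam \<inter> K lam' = {}"
  using permutative_data_adj_nonzero[OF assms(1,2)]
    permutative_data_adj_vanishes[OF assms(1-3)] assms(4,5)
  by fastforce

theorem lemma4p2:
  fixes L V :: "'a set" and r s :: "'a \<Rightarrow> 'a" and cmp :: "'a \<Rightarrow> 'a \<Rightarrow> 'a"
    and d :: "'a \<Rightarrow> 'k::finite \<Rightarrow> nat"
    and t :: "'a \<Rightarrow> 'h::complex_hilbert \<Rightarrow> 'h"
    and I :: "'i set" and e :: "'i \<Rightarrow> 'h"
    and J K :: "'a \<Rightarrow> 'i set" and \<sigma> :: "'a \<Rightarrow> 'i \<Rightarrow> 'i"
  assumes "kgraph L V r s cmp d"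
    and "row_finite L V r d"
    and "no_sources L V r d"
    and "ck_family L V r s cmp d t"
    and "permutative_data L V r s cmp d t I e J K \<sigma>"
  shows "\<forall>n. \<forall>lam\<in>L. \<forall>lam'\<in>L. d lam = n \<and> d lam' = n \<and> lam \<noteq> lam' \<longrightarrow> K lam \<inter> K lam' = {}"
  using permutative_data_range_disjoint[OF assms(5)] by auto

end
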